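(* For an odd integer $t\ge1$, in $S_{\mathrm{alg}}$, $$h(1)\,h[-1]^t\mathbf 1=\sum_{k\ge0}\binom{t}{2k+1}\frac{(2k+1)!}{k!\,(-24)^k}\,h(-1)^{t-2k-1}\mathbf 1.$$
   Context: $S_{\mathrm{alg}}=\mathbb{Q}[h(-1),h(-2),\dots]$ is the rank-one Heisenberg VOA with vacuum $\mathbf 1=1$; $h(n)$ for $n<0$ is multiplication by $h(n)$, $h(0)=0$, and $h(n)=n\,\partial/\partial h(-n)$ for $n>0$. The square-bracket mode $h[-1]$ is $h[-1]=\mathrm{Res}_w\,h(w)(\log(1+w))^{-1}=\sum_{k\ge0}c_k\,h(k-1)$ where $h(w)=\sum_m h(m)w^{-m-1}$ and $\sum_{k\ge0}c_kw^{k-1}=1/\log(1+w)$, so $h[-1]=h(-1)+\tfrac12h(0)-\tfrac1{12}h(1)+\tfrac1{24}h(2)-\cdots$. *)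

theory Defs
  imports "HOL-Library.Poly_Mapping" "HOL-Library.Groups_Big_Fun"
          "HOL-Computational_Algebra.Formal_Power_Series"
begin

text \<open>S_alg = Q[h(-1), h(-2), ...]: polynomials in countably many variables,
  represented as finitely supported maps from monomials (exponent vectors
  nat =>0 nat) to rationals. The variable with index i stands for h(-(i+1)).\<close>

type_synonym S_alg = "(nat \<Rightarrow>\<^sub>0 nat) \<Rightarrow>\<^sub>0 rat"

definition hvar :: "nat \<Rightarrow> S_alg" where
  "hvar i = Poly_Mapping.single (Poly_Mapping.single i 1) 1"

definition pderiv_var :: "nat \<Rightarrow> S_alg \<Rightarrow> S_alg" where
  "pderiv_var i p = (\<Sum>m\<in>Poly_Mapping.keys p.
      Poly_Mapping.single (m - Poly_Mapping.single i 1)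
        (of_nat (Poly_Mapping.lookup m i) * Poly_Mapping.lookup p m))"

definition hmode :: "int \<Rightarrow> S_alg \<Rightarrow> S_alg" where
  "hmode n v = (if n < 0 then hvar (nat (- n) - 1) * v
                else if n = 0 then 0
                else of_int n * pderiv_var (nat n - 1) v)"

text \<open>Coefficients c_k with sum_k c_k w^(k-1) = 1/log(1+w), i.e.
  sum_k c_k w^k = (log(1+w)/w)^(-1).\<close>
definition log1p_over_w :: "rat fps" where
  "log1p_over_w = Abs_fps (\<lambda>n. (-1) ^ n / of_nat (n + 1))"

definition cbr :: "nat \<Rightarrow> rat" where
  "cbr k = fps_nth (inverse log1p_over_w) k"

text \<open>Square-bracket mode h[-1] = sum_{k>=0} c_k h(k-1); on any given vector
  only finitely many terms are nonzero, so this is a finite-support sum.\<close>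
definition hbr_m1 :: "S_alg \<Rightarrow> S_alg" where
  "hbr_m1 v = Sum_any (\<lambda>k. Poly_Mapping.single 0 (cbr k) * hmode (int k - 1) v)"

definition vac :: S_alg where "vac = 1"

end

theory Submission
  imports Defs "HOL-Computational_Algebra.Polynomial"
begin

text \<open>On polynomials in h(-1) alone, only the terms c_0 h(-1) and c_2 h(1) of h[-1] survive,
  and c_2 = -1/12. Hence h[-1] acts on p(h(-1)) as the operator p \<mapsto> x p - p'/12, whose
  iterates on 1 are Hermite polynomials of variance 1/12: the coefficient of x^n in the t-th
  iterate is t! (-1/24)^k / (n! k!) for t = n + 2k. Since h(1) = d/dh(-1), the theorem follows
  by differentiating the t-th iterate term by term.\<close>

abbreviation (input) unit_exp :: "nat \<Rightarrow> nat \<Rightarrow>\<^sub>0 nat" where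
  "unit_exp i \<equiv> Poly_Mapping.single i 1"

lemma lookup_hvar_mult_add:
  "Poly_Mapping.lookup (hvar i * p) (m + unit_exp i) = Poly_Mapping.lookup p m"
proof -
  have "m + unit_exp i = unit_exp i + q \<longleftrightarrow> q = m" for q
    by (metis add.commute add_right_cancel)
  then show ?thesis
    by (simp add: hvar_def lookup_mult lookup_single when_mult mult_when)
qed

lemma lookup_hvar_mult_eq_0:
  assumes "Poly_Mapping.lookup m i = 0"
  shows "Poly_Mapping.lookup (hvar i * p) m = 0"
proof -
  have "(Poly_Mapping.lookup p q when m = unit_exp i + q) = 0" for q
    using assms by (auto simp: lookup_add when_def)
  then show ?thesis
    by (simp add: hvar_def lookup_mult lookup_single when_mult mult_when)
qed

lemma add_unit_exp_minus:
  "Poly_Mapping.lookup m i \<noteq> 0 \<Longrightarrow> m - unit_exp i + unit_exp i = m"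
  by (rule poly_mapping_eqI) (auto simp: lookup_add lookup_minus lookup_single when_def)

lemma lookup_pderiv_var:
  "Poly_Mapping.lookup (pderiv_var i p) m =
     of_nat (Poly_Mapping.lookup m i + 1) * Poly_Mapping.lookup p (m + unit_exp i)"
proof -
  define c where "c m' = of_nat (Poly_Mapping.lookup m' i) * Poly_Mapping.lookup p m'" for m'
  have "(c m' when m' - unit_exp i = m) = (c m' when m' = m + unit_exp i)" for m'
    using add_unit_exp_minus[of m' i]
    by (cases "Poly_Mapping.lookup m' i = 0") (auto simp: c_def when_def)
  then have "Poly_Mapping.lookup (pderiv_var i p) m =
      (\<Sum>m'\<in>Poly_Mapping.keys p. c m' when m' = m + unit_exp i)"
    by (simp add: pderiv_var_def lookup_sum lookup_single c_def)
  also have "\<dots> = c (m + unit_exp i)"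
    by (simp add: when_def in_keys_iff c_def)
  finally show ?thesis
    by (simp add: c_def lookup_add)
qed

lemma pderiv_var_add: "pderiv_var i (p + q) = pderiv_var i p + pderiv_var i q"
  by (rule poly_mapping_eqI) (simp add: lookup_pderiv_var lookup_add algebra_simps)

lemma pderiv_var_hvar_mult:
  "pderiv_var j (hvar i * p) = (if i = j then p else 0) + hvar i * pderiv_var j p"
proof (rule poly_mapping_eqI)
  fix m
  show "Poly_Mapping.lookup (pderiv_var j (hvar i * p)) m =
        Poly_Mapping.lookup ((if i = j then p else 0) + hvar i * pderiv_var j p) m"
  proof (cases "Poly_Mapping.lookup m i = 0")
    case True
    then show ?thesis
      using lookup_hvar_mult_add[of i p m]
      by (auto simp: lookup_pderiv_var lookup_add lookup_single lookup_hvar_mult_eq_0)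
  next
    case False
    then obtain m' where m: "m = m' + unit_exp i"
      using add_unit_exp_minus by metis
    have "m + unit_exp j = (m' + unit_exp j) + unit_exp i"
      by (simp add: m add.commute add.left_commute)
    then have "Poly_Mapping.lookup (pderiv_var j (hvar i * p)) m =
        of_nat (Poly_Mapping.lookup m j + 1) * Poly_Mapping.lookup p (m' + unit_exp j)"
      by (simp only: lookup_pderiv_var lookup_hvar_mult_add)
    moreover have "Poly_Mapping.lookup (hvar i * pderiv_var j p) m =
        of_nat (Poly_Mapping.lookup m' j + 1) * Poly_Mapping.lookup p (m' + unit_exp j)"
      by (simp only: m lookup_hvar_mult_add lookup_pderiv_var)
    ultimately show ?thesis
      by (cases "i = j") (simp_all add: m lookup_add lookup_single algebra_simps)
  qed
qed

lemma pderiv_var_single_0: "pderiv_var i (Poly_Mapping.single 0 c) = 0"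
  by (simp add: pderiv_var_def)

definition eval_h1 :: "rat poly \<Rightarrow> S_alg" where
  "eval_h1 p = poly (map_poly (Poly_Mapping.single 0) p) (hvar 0)"

lemma eval_h1_pCons: "eval_h1 (pCons c p) = Poly_Mapping.single 0 c + hvar 0 * eval_h1 p"
  by (simp add: eval_h1_def map_poly_pCons)

lemma eval_h1_0 [simp]: "eval_h1 0 = 0"
  by (simp add: eval_h1_def)

lemma eval_h1_1 [simp]: "eval_h1 1 = 1"
  by (simp add: eval_h1_def)

lemma eval_h1_add: "eval_h1 (p + q) = eval_h1 p + eval_h1 q"
proof -
  have "map_poly (Poly_Mapping.single (0 :: nat \<Rightarrow>\<^sub>0 nat)) (p + q) =
        map_poly (Poly_Mapping.single 0) p + map_poly (Poly_Mapping.single 0) q"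
    by (rule poly_eqI) (simp add: coeff_map_poly single_add)
  then show ?thesis
    by (simp add: eval_h1_def)
qed

lemma eval_h1_smult: "eval_h1 (smult c p) = Poly_Mapping.single 0 c * eval_h1 p"
  by (simp add: eval_h1_def map_poly_smult mult_single)

lemma eval_h1_monom: "eval_h1 (monom c n) = Poly_Mapping.single 0 c * hvar 0 ^ n"
  by (simp add: eval_h1_def map_poly_monom poly_monom)

lemma eval_h1_sum: "eval_h1 (\<Sum>k\<in>A. p k) = (\<Sum>k\<in>A. eval_h1 (p k))"
  by (induction A rule: infinite_finite_induct) (simp_all add: eval_h1_add)

lemma pderiv_var_eval_h1:
  "pderiv_var j (eval_h1 p) = (if j = 0 then eval_h1 (pderiv p) else 0)"
proof (induction p)
  case 0
  then show ?case
    by (simp add: pderiv_var_def)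
next
  case (pCons c p)
  then show ?case
    by (auto simp: eval_h1_pCons pderiv_var_add pderiv_var_single_0 pderiv_var_hvar_mult
        pderiv_pCons eval_h1_add)
qed

lemma cbr_0: "cbr 0 = 1"
  by (simp add: cbr_def log1p_over_w_def)

lemma cbr_2: "cbr 2 = -1/12"
proof -
  have c1: "fps_right_inverse_constructor log1p_over_w 1 1 = 1/2"
    by (simp add: log1p_over_w_def)
  have "cbr 2 = fps_right_inverse_constructor log1p_over_w 1 2"
    by (simp add: cbr_def fps_inverse_def log1p_over_w_def)
  also have "\<dots> = - (fps_nth log1p_over_w 1 * fps_right_inverse_constructor log1p_over_w 1 1
        + fps_nth log1p_over_w 2 * fps_right_inverse_constructor log1p_over_w 1 0)"
    by (simp add: numeral_2_eq_2 atLeastAtMostSuc_conv)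
  also have "\<dots> = -1/12"
    using c1 by (simp add: log1p_over_w_def)
  finally show ?thesis .
qed

definition hbr_m1_poly :: "rat poly \<Rightarrow> rat poly" where
  "hbr_m1_poly p = pCons 0 p + smult (-1/12) (pderiv p)"

lemma hbr_m1_eval_h1: "hbr_m1 (eval_h1 p) = eval_h1 (hbr_m1_poly p)"
proof -
  define f where "f k = Poly_Mapping.single 0 (cbr k) * hmode (int k - 1) (eval_h1 p)" for k
  have "f k = 0" if "k \<notin> {0, 2}" for k
  proof (cases "k = 1")
    case False
    with that have "nat (int k - 1) - 1 \<noteq> 0"
      by (simp, arith)
    with that show ?thesis
      by (simp add: f_def hmode_def pderiv_var_eval_h1)
  qed (simp add: f_def hmode_def)
  then have "hbr_m1 (eval_h1 p) = f 0 + f 2"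
    unfolding hbr_m1_def f_def[symmetric] by (subst Sum_any.expand_superset[of "{0, 2}"]) auto
  also have "\<dots> = eval_h1 (hbr_m1_poly p)"
    unfolding hbr_m1_poly_def eval_h1_add eval_h1_smult eval_h1_pCons
    by (simp add: f_def cbr_0 cbr_2 hmode_def pderiv_var_eval_h1)
  finally show ?thesis .
qed

lemma coeff_sum_monom_parity:
  "coeff (\<Sum>k\<le>s div 2. monom (a k) (s - 2*k)) n =
     (if n \<le> s \<and> even (s - n) then a ((s - n) div 2) else 0)"
proof -
  have "(s - 2*k = n) \<longleftrightarrow> (k = (s - n) div 2 \<and> n \<le> s \<and> even (s - n))"
    if "k \<le> s div 2" for k
    using that by auto
  then have "coeff (\<Sum>k\<le>s div 2. monom (a k) (s - 2*k)) n =
      (\<Sum>k\<le>s div 2. if k = (s - n) div 2 \<and> n \<le> s \<and> even (s - n) then a k else 0)"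
    by (auto simp: coeff_sum intro!: sum.cong)
  also have "\<dots> = (if n \<le> s \<and> even (s - n) then a ((s - n) div 2) else 0)"
  proof (cases "n \<le> s \<and> even (s - n)")
    case True
    then have "(s - n) div 2 \<in> {..s div 2}"
      by (simp add: div_le_mono)
    with True show ?thesis
      by (simp add: sum.delta)
  next
    case False
    then have "(\<Sum>k\<le>s div 2.
        if k = (s - n) div 2 \<and> n \<le> s \<and> even (s - n) then a k else 0) = 0"
      by (intro sum.neutral) auto
    with False show ?thesis
      by auto
  qed
  finally show ?thesis .
qed

definition hermite_coeff :: "nat \<Rightarrow> nat \<Rightarrow> rat" where
  "hermite_coeff s n =
     (if n \<le> s \<and> even (s - n)
      then fact s / (fact n * fact ((s - n) div 2)) * (-1/24) ^ ((s - n) div 2) else 0)"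

definition hermite_poly :: "nat \<Rightarrow> rat poly" where
  "hermite_poly s = (\<Sum>k\<le>s div 2. monom (hermite_coeff s (s - 2*k)) (s - 2*k))"

lemma coeff_hermite_poly: "coeff (hermite_poly s) n = hermite_coeff s n"
  unfolding hermite_poly_def coeff_sum_monom_parity
  by (auto simp: hermite_coeff_def elim!: evenE)

lemma hermite_coeff_eq:
  "s = n + 2*k \<Longrightarrow> hermite_coeff s n = fact s / (fact n * fact k) * (-1/24) ^ k"
  by (simp add: hermite_coeff_def)

lemma hermite_coeff_Suc:
  "hermite_coeff (Suc s) n =
     (if n = 0 then 0 else hermite_coeff s (n - 1))
       - 1/12 * (of_nat (Suc n) * hermite_coeff s (Suc n))"
proof (cases "n \<le> Suc s \<and> even (Suc s - n)")
  case True
  then obtain k where s: "Suc s = n + 2*k"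
    by (metis evenE le_add_diff_inverse)
  \<comment> \<open>Both terms of the recurrence are multiples of c; they add up since n + 2k = s + 1.\<close>
  define c where "c = fact s / (fact n * fact k) * (-1/24 :: rat) ^ k"
  have shift: "(if n = 0 then 0 else hermite_coeff s (n - 1)) = of_nat n * c"
  proof (cases n)
    case (Suc m)
    then have "hermite_coeff s m =
        of_nat (Suc m) * (fact s / (fact (Suc m) * fact k) * (-1/24) ^ k)"
      using s by (simp add: hermite_coeff_eq fact_Suc del: of_nat_Suc)
    then show ?thesis
      by (simp add: Suc c_def)
  qed simp
  have deriv: "- 1/12 * (of_nat (Suc n) * hermite_coeff s (Suc n)) = 2 * of_nat k * c"
  proof (cases k)
    case 0
    then show ?thesis
      using s by (simp add: hermite_coeff_def)
  next
    case (Suc j)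
    then have h: "of_nat (Suc n) * hermite_coeff s (Suc n) =
        fact s / (fact n * fact j) * (-1/24) ^ j"
      using s by (simp add: hermite_coeff_eq fact_Suc del: of_nat_Suc)
    show ?thesis
      unfolding h by (simp add: Suc c_def fact_Suc field_simps del: of_nat_Suc)
  qed
  have "hermite_coeff (Suc s) n = fact (Suc s) / (fact n * fact k) * (-1/24) ^ k"
    using s by (rule hermite_coeff_eq)
  also have "\<dots> = of_nat (Suc s) * c"
    by (simp add: c_def fact_Suc del: of_nat_Suc)
  also have "\<dots> = of_nat n * c + 2 * of_nat k * c"
    by (simp add: s algebra_simps)
  finally show ?thesis
    using shift deriv by simp
next
  case False
  then show ?thesis
    by (auto simp: hermite_coeff_def)
qed

lemma hbr_m1_poly_hermite_poly: "hbr_m1_poly (hermite_poly s) = hermite_poly (Suc s)"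
proof (rule poly_eqI)
  fix n
  show "coeff (hbr_m1_poly (hermite_poly s)) n = coeff (hermite_poly (Suc s)) n"
    by (cases n)
      (simp_all add: hbr_m1_poly_def coeff_pderiv coeff_hermite_poly hermite_coeff_Suc
        del: of_nat_Suc)
qed

lemma hermite_poly_0: "hermite_poly 0 = 1"
  by (simp add: hermite_poly_def hermite_coeff_def)

lemma odd_hermite_deriv_coeff:
  assumes "2*k + 1 \<le> t"
  shows "of_nat (t - 2*k) * hermite_coeff t (t - 2*k) =
    of_nat (t choose (2*k+1)) * of_nat (fact (2*k+1)) / (of_nat (fact k) * (-24) ^ k)"
proof -
  define m where "m = t - (2*k + 1)"
  have t: "t - 2*k = Suc m"
    using assms by (simp add: m_def)
  have "hermite_coeff t (Suc m) = fact t / (fact (Suc m) * fact k) * (-1/24) ^ k"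
    using assms by (intro hermite_coeff_eq) (simp add: m_def)
  then have "of_nat (t - 2*k) * hermite_coeff t (t - 2*k) =
      of_nat (Suc m) * (fact t / (fact (Suc m) * fact k) * (-1/24) ^ k)"
    by (simp only: t)
  also have "\<dots> = fact t / (fact m * fact k * (-24) ^ k)"
  proof -
    have "(-24 :: rat) ^ k * (-1/24) ^ k = 1"
      by (simp flip: power_mult_distrib)
    then show ?thesis
      by (simp add: fact_Suc power_divide field_simps del: of_nat_Suc)
  qed
  also have "fact t = of_nat (t choose (2*k+1)) * of_nat (fact (2*k+1)) * (fact m :: rat)"
  proof -
    have "fact (2*k+1) * fact m * (t choose (2*k+1)) = (fact t :: nat)"
      using binomial_fact_lemma[OF assms] by (simp add: m_def)
    from arg_cong[OF this, of "of_nat :: nat \<Rightarrow> rat"] show ?thesis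
      by (simp only: of_nat_mult of_nat_fact mult_ac)
  qed
  finally show ?thesis
    by simp
qed

lemma pderiv_hermite_poly_odd:
  assumes "odd t"
  shows "pderiv (hermite_poly t) = (\<Sum>k\<le>t div 2.
    monom (of_nat (t choose (2*k+1)) * of_nat (fact (2*k+1)) / (of_nat (fact k) * (-24) ^ k))
      (t - 2*k - 1))"
  unfolding hermite_poly_def higher_pderiv_sum[of 1, simplified] pderiv_monom
proof (rule sum.cong)
  fix k assume "k \<in> {..t div 2}"
  then have "2*k + 1 \<le> t"
    using assms by simp presburger
  then show "monom (of_nat (t - 2*k) * hermite_coeff t (t - 2*k)) (t - 2*k - 1) =
    monom (of_nat (t choose (2*k+1)) * of_nat (fact (2*k+1)) / (of_nat (fact k) * (-24) ^ k))
      (t - 2*k - 1)"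
    by (simp only: odd_hermite_deriv_coeff)
qed simp

lemma hbr_m1_power_vac: "(hbr_m1 ^^ s) vac = eval_h1 (hermite_poly s)"
  by (induction s)
    (simp_all add: vac_def hermite_poly_0 hbr_m1_eval_h1 hbr_m1_poly_hermite_poly)

lemma hmode_m1_power_vac: "(hmode (-1) ^^ n) vac = hvar 0 ^ n"
  by (induction n) (simp_all add: vac_def hmode_def)

theorem mainTheorem4:
  fixes t :: nat
  assumes "odd t" and "t \<ge> 1"
  shows "hmode 1 ((hbr_m1 ^^ t) vac) =
    (\<Sum>k\<le>t div 2. Poly_Mapping.single 0
        (of_nat (t choose (2*k+1)) * of_nat (fact (2*k+1))
          / (of_nat (fact k) * (-24) ^ k))
      * (hmode (-1) ^^ (t - 2*k - 1)) vac)"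
proof -
  have "hmode 1 ((hbr_m1 ^^ t) vac) = eval_h1 (pderiv (hermite_poly t))"
    by (simp add: hmode_def hbr_m1_power_vac pderiv_var_eval_h1)
  then show ?thesis
    unfolding pderiv_hermite_poly_odd[OF assms(1)] eval_h1_sum eval_h1_monom hmode_m1_power_vac .
qed

end
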